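(* Let $\alpha=(\alpha_1,\dots,\alpha_t)$ be palindromic (i.e. $\alpha_i=\alpha_{t+1-i}$ for all $i$) with $t$ odd, let $F=\breve F(\alpha)$ with elements $x_1,\dots,x_n$ and shared elements $s_1,\dots,s_{t-1}$. Assume that $\chi_{s_i}-\chi_{s_{t-i}}$ is $0$-mesic under rowmotion for all $i\in[t-1]$. Then (1) $\chi_{x_k}-\chi_{x_{n-k+1}}$ is $0$-mesic for all $k\in[n]$, and (2) $\hat\chi_{x_k}+\hat\chi_{x_{n-k+1}}$ is $1$-mesic for all $k\in[n]$.
   Context: A fence $\breve F(\alpha_1,\dots,\alpha_t)$ ($t\ge2$, positive integers, $\alpha_1,\alpha_t\ge2$) is the poset on $\{x_1,\dots,x_n\}$, $n=\alpha_1+\dots+\alpha_t-1$, with $a_i=\alpha_1+\dots+\alpha_i$, $a_0=0$, whose cover relations are: for $1\le j\le n-1$ with $a_{i-1}\le j<a_i$, $x_j\lessdot x_{j+1}$ if $i$ odd and $x_j\gtrdot x_{j+1}$ if $i$ even. Shared elements: $s_i=x_{a_i}$. $\mathcal J(F)$ is the set of order ideals; rowmotion $\rho:\mathcal J(F)\to\mathcal J(F)$ sends $I$ to the order ideal generated by $\min(F\setminus I)$. $\hat\chi_q(I)=1$ if $q\in I$, else 0; $\chi_q(I)=1$ if $q\in\max(I)$, else 0. A statistic $f:\mathcal J(F)\to\mathbb R$ is $c$-mesic under rowmotion if its average over every $\rho$-orbit equals $c$. *)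

theory Defs
  imports Complex_Main
begin

text \<open>A fence F(alpha_1,...,alpha_t) is encoded by the list alpha = [alpha_1,...,alpha_t].
  Its elements x_1..x_n are represented by the natural numbers 1..n.\<close>

definition is_fence_comp :: "nat list \<Rightarrow> bool" where
  "is_fence_comp \<alpha> \<longleftrightarrow> length \<alpha> \<ge> 2 \<and> (\<forall>a \<in> set \<alpha>. a > 0)
     \<and> hd \<alpha> \<ge> 2 \<and> last \<alpha> \<ge> 2"

definition fence_n :: "nat list \<Rightarrow> nat" where
  "fence_n \<alpha> = sum_list \<alpha> - 1"

text \<open>a_i = alpha_1 + ... + alpha_i; shared element s_i = x_{a_i}.\<close>
definition fence_a :: "nat list \<Rightarrow> nat \<Rightarrow> nat" where
  "fence_a \<alpha> i = sum_list (take i \<alpha>)"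

definition fence_elems :: "nat list \<Rightarrow> nat set" where
  "fence_elems \<alpha> = {1..fence_n \<alpha>}"

text \<open>Cover relations as pairs (lower, upper).\<close>
definition fence_cover :: "nat list \<Rightarrow> (nat \<times> nat) set" where
  "fence_cover \<alpha> =
     {(j, j + 1) | j i. 1 \<le> j \<and> j < fence_n \<alpha> \<and> 1 \<le> i \<and> i \<le> length \<alpha>
        \<and> fence_a \<alpha> (i - 1) \<le> j \<and> j < fence_a \<alpha> i \<and> odd i}
   \<union> {(j + 1, j) | j i. 1 \<le> j \<and> j < fence_n \<alpha> \<and> 1 \<le> i \<and> i \<le> length \<alpha>
        \<and> fence_a \<alpha> (i - 1) \<le> j \<and> j < fence_a \<alpha> i \<and> even i}"

definition fence_le :: "nat list \<Rightarrow> nat \<Rightarrow> nat \<Rightarrow> bool" where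
  "fence_le \<alpha> x y \<longleftrightarrow> (x, y) \<in> (fence_cover \<alpha>)\<^sup>*"

definition fence_ideals :: "nat list \<Rightarrow> nat set set" where
  "fence_ideals \<alpha> = {I. I \<subseteq> fence_elems \<alpha> \<and>
     (\<forall>x \<in> I. \<forall>y \<in> fence_elems \<alpha>. fence_le \<alpha> y x \<longrightarrow> y \<in> I)}"

definition fence_min :: "nat list \<Rightarrow> nat set \<Rightarrow> nat set" where
  "fence_min \<alpha> S = {x \<in> S. \<forall>y \<in> S. fence_le \<alpha> y x \<longrightarrow> y = x}"

definition fence_max :: "nat list \<Rightarrow> nat set \<Rightarrow> nat set" where
  "fence_max \<alpha> S = {x \<in> S. \<forall>y \<in> S. fence_le \<alpha> x y \<longrightarrow> y = x}"

definition rowmotion :: "nat list \<Rightarrow> nat set \<Rightarrow> nat set" where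
  "rowmotion \<alpha> I = {y \<in> fence_elems \<alpha>.
     \<exists>x \<in> fence_min \<alpha> (fence_elems \<alpha> - I). fence_le \<alpha> y x}"

definition row_orbit :: "nat list \<Rightarrow> nat set \<Rightarrow> nat set set" where
  "row_orbit \<alpha> I = {(rowmotion \<alpha> ^^ k) I | k. True}"

definition chi_hat :: "nat \<Rightarrow> nat set \<Rightarrow> real" where
  "chi_hat q I = (if q \<in> I then 1 else 0)"

definition chi :: "nat list \<Rightarrow> nat \<Rightarrow> nat set \<Rightarrow> real" where
  "chi \<alpha> q I = (if q \<in> fence_max \<alpha> I then 1 else 0)"

definition mesic :: "nat list \<Rightarrow> (nat set \<Rightarrow> real) \<Rightarrow> real \<Rightarrow> bool" where
  "mesic \<alpha> f c \<longleftrightarrow> (\<forall>I \<in> fence_ideals \<alpha>.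
     (\<Sum>J \<in> row_orbit \<alpha> I. f J) / real (card (row_orbit \<alpha> I)) = c)"

end

theory Submission
  imports Defs
begin

text \<open>Extend the fence by x_0 < x_1 and x_n < x_(n+1), where x_0 lies in every order ideal and
  x_(n+1) in none. Fix a rowmotion orbit O; let h(k) be the number of ideals in O containing x_k
  and c(k) the number of those having x_k as a maximal element. The maximal elements of rho(I)
  are the minimal elements of F - I, and rho permutes O, so c(k) can be counted both through the
  upper covers of x_k in I and through its lower covers in I. Inside a monotone run, where x_k
  has exactly one upper cover x_u and one lower cover x_l, this gives
  c(k) = h(k) - h(u) = h(l) - h(k), so h is affine there; at a peak c(k) = h(k), and at a
  valley c(k) = |O| - h(k).

  For a palindromic composition of odd length the reflection k |-> n+1-k maps runs to runs and
  exchanges peaks and valleys, which are exactly the shared elements. Hence the defect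
  g(k) = h(k) + h(n+1-k) - |O| is affine at all non-shared elements and vanishes at the shared
  ones by the hypothesis. Since g(0) = g(n+1) = 0, the discrete maximum principle gives g = 0,
  which is (2); then (1) follows from the local formulas for c at k and n+1-k.\<close>

lemma rev_eq_if_nth_mirror:
  assumes "\<And>i. i < length xs \<Longrightarrow> xs ! i = xs ! (length xs - 1 - i)"
  shows "rev xs = xs"
proof (rule nth_equalityI)
  fix i assume "i < length (rev xs)"
  then show "rev xs ! i = xs ! i"
    using assms[of "length xs - 1 - i"] by (simp add: rev_nth)
qed simp

lemma max_principle_nonpos:
  fixes g :: "nat \<Rightarrow> real"
  assumes boundary: "g 0 = 0" "g m = 0"
    and interior: "\<And>y. 0 < y \<Longrightarrow> y < m \<Longrightarrow> g y = 0 \<or> 2 * g y = g (y - 1) + g (y + 1)"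
    and "y \<le> m"
  shows "g y \<le> 0"
proof (rule ccontr)
  assume "\<not> g y \<le> 0"
  define M where "M = Max (g ` {..m})"
  have le_M: "z \<le> m \<Longrightarrow> g z \<le> M" for z
    unfolding M_def by (intro Max_ge) auto
  have M_pos: "0 < M"
    using le_M[OF \<open>y \<le> m\<close>] \<open>\<not> g y \<le> 0\<close> by simp
  have "\<exists>z \<le> m. g z = M"
    unfolding M_def using Max_in[of "g ` {..m}"] by fastforce
  \<comment> \<open>The leftmost point where the maximum is attained cannot be a midpoint.\<close>
  define y0 where "y0 = (LEAST z. z \<le> m \<and> g z = M)"
  have y0: "y0 \<le> m" "g y0 = M"
    using LeastI_ex[OF \<open>\<exists>z \<le> m. g z = M\<close>] unfolding y0_def by auto
  have "0 < y0" "y0 < m"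
    using y0 boundary M_pos by (auto intro: Nat.gr0I le_neq_implies_less)
  have "2 * M = g (y0 - 1) + g (y0 + 1)"
    using interior[OF \<open>0 < y0\<close> \<open>y0 < m\<close>] y0 M_pos by auto
  moreover have "g (y0 - 1) \<noteq> M"
  proof
    assume "g (y0 - 1) = M"
    then have "(LEAST z. z \<le> m \<and> g z = M) \<le> y0 - 1"
      using y0 by (intro Least_le) simp
    then show False
      using \<open>0 < y0\<close> by (simp add: y0_def[symmetric])
  qed
  then have "g (y0 - 1) < M"
    using le_M[of "y0 - 1"] y0 by fastforce
  moreover have "g (y0 + 1) \<le> M"
    using le_M[of "y0 + 1"] \<open>y0 < m\<close> by simp
  ultimately show False by linarith
qed

lemma max_principle_zero:
  fixes g :: "nat \<Rightarrow> real"
  assumes boundary: "g 0 = 0" "g m = 0"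
    and interior: "\<And>y. 0 < y \<Longrightarrow> y < m \<Longrightarrow> g y = 0 \<or> 2 * g y = g (y - 1) + g (y + 1)"
    and "y \<le> m"
  shows "g y = 0"
proof -
  have "g y \<le> 0"
    using max_principle_nonpos[OF boundary interior \<open>y \<le> m\<close>] .
  moreover have "(\<lambda>k. - g k) y \<le> 0"
  proof (rule max_principle_nonpos[where m = m])
    fix z :: nat assume "0 < z" "z < m"
    then show "- g z = 0 \<or> 2 * - g z = - g (z - 1) + - g (z + 1)"
      using interior[of z] by auto
  qed (use boundary \<open>y \<le> m\<close> in auto)
  ultimately show ?thesis by simp
qed

locale fence =
  fixes \<alpha> :: "nat list"
  assumes fence_comp: "is_fence_comp \<alpha>"
begin

abbreviation "t \<equiv> length \<alpha>"
abbreviation "n \<equiv> fence_n \<alpha>"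
abbreviation "a \<equiv> fence_a \<alpha>"
abbreviation "C \<equiv> fence_cover \<alpha>"
abbreviation "E \<equiv> fence_elems \<alpha>"
abbreviation "Ids \<equiv> fence_ideals \<alpha>"
abbreviation "\<rho> \<equiv> rowmotion \<alpha>"

definition ascends :: "nat \<Rightarrow> bool" where
  "ascends j \<longleftrightarrow> (j, j + 1) \<in> C"

lemma length_ge_2: "2 \<le> t"
  using fence_comp by (simp add: is_fence_comp_def)

lemma first_ge_2: "2 \<le> \<alpha> ! 0"
  and last_ge_2: "2 \<le> \<alpha> ! (t - 1)"
proof -
  have "\<alpha> \<noteq> []"
    using length_ge_2 by auto
  then show "2 \<le> \<alpha> ! 0" "2 \<le> \<alpha> ! (t - 1)"
    using fence_comp by (simp_all add: is_fence_comp_def hd_conv_nth last_conv_nth)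
qed

lemma a_0: "a 0 = 0"
  by (simp add: fence_a_def)

lemma a_Suc: "i < t \<Longrightarrow> a (Suc i) = a i + \<alpha> ! i"
  by (simp add: fence_a_def take_Suc_conv_app_nth)

lemma a_mono: "i \<le> j \<Longrightarrow> a i \<le> a j"
  by (auto simp: fence_a_def le_iff_add take_add)

lemma a_1: "a 1 = \<alpha> ! 0"
  using a_Suc[of 0] a_0 length_ge_2 by fastforce

lemma a_length: "a t = n + 1"
proof -
  have "\<alpha> ! 0 \<le> sum_list \<alpha>"
    using length_ge_2 by (auto intro!: member_le_sum_list nth_mem)
  then show ?thesis
    using first_ge_2 by (simp add: fence_a_def fence_n_def)
qed

lemma n_ge_3: "3 \<le> n"
proof -
  have "Suc (t - 1) = t"
    using length_ge_2 by simp
  then have "a (t - 1) + \<alpha> ! (t - 1) = n + 1"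
    using a_Suc[of "t - 1"] a_length by simp
  moreover have "a 1 \<le> a (t - 1)"
    using length_ge_2 by (intro a_mono) simp
  ultimately show ?thesis
    using a_1 first_ge_2 last_ge_2 by linarith
qed

lemma segment_exists:
  assumes "j \<le> n"
  obtains i where "1 \<le> i" "i \<le> t" "a (i - 1) \<le> j" "j < a i"
proof
  define i where "i = (LEAST i. j < a i)"
  have "j < a t"
    using assms a_length by simp
  then show "j < a i" "i \<le> t"
    unfolding i_def by (auto intro: LeastI Least_le)
  then show "1 \<le> i"
    using a_0 by (metis less_one not_less not_less0)
  then show "a (i - 1) \<le> j"
    unfolding i_def using not_less_Least[of "i - 1" "\<lambda>i. j < a i"] i_def by fastforce
qed

lemma segment_unique:
  assumes "1 \<le> i" "a (i - 1) \<le> j" "j < a i" "1 \<le> i'" "a (i' - 1) \<le> j" "j < a i'"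
  shows "i = i'"
proof (rule ccontr)
  assume "i \<noteq> i'"
  then have "a i \<le> a (i' - 1) \<or> a i' \<le> a (i - 1)"
    using a_mono by (metis linorder_neqE_nat assms(1,4) le_diff_conv2 Suc_leI add.commute plus_1_eq_Suc)
  then show False
    using assms by linarith
qed

lemma cover_in_segment:
  assumes seg: "1 \<le> i" "i \<le> t" "a (i - 1) \<le> j" "j < a i" and j: "1 \<le> j" "j < n"
  shows "ascends j \<longleftrightarrow> odd i" and "(j + 1, j) \<in> C \<longleftrightarrow> even i"
proof -
  have "(j, j + 1) \<in> C \<longleftrightarrow> (\<exists>i'. 1 \<le> i' \<and> i' \<le> t \<and> a (i' - 1) \<le> j \<and> j < a i' \<and> odd i')"
    and "(j + 1, j) \<in> C \<longleftrightarrow> (\<exists>i'. 1 \<le> i' \<and> i' \<le> t \<and> a (i' - 1) \<le> j \<and> j < a i' \<and> even i')"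
    using j by (auto simp: fence_cover_def)
  then show "ascends j \<longleftrightarrow> odd i" and "(j + 1, j) \<in> C \<longleftrightarrow> even i"
    unfolding ascends_def using seg segment_unique[of i j] by blast+
qed

lemma descends_iff: "(j + 1, j) \<in> C \<longleftrightarrow> 1 \<le> j \<and> j < n \<and> \<not> ascends j"
proof (cases "1 \<le> j \<and> j < n")
  case True
  then obtain i where "1 \<le> i" "i \<le> t" "a (i - 1) \<le> j" "j < a i"
    using segment_exists[of j] by auto
  then show ?thesis
    using cover_in_segment True by blast
qed (auto simp: fence_cover_def)

lemma ascends_range: "ascends j \<Longrightarrow> 1 \<le> j \<and> j < n"
  by (auto simp: ascends_def fence_cover_def)

lemma cover_iff:
  "(x, y) \<in> C \<longleftrightarrow> y = x + 1 \<and> ascends x \<or> x = y + 1 \<and> 1 \<le> y \<and> y < n \<and> \<not> ascends y"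
proof
  assume "(x, y) \<in> C"
  then have "y = x + 1 \<or> x = y + 1"
    by (auto simp: fence_cover_def)
  then show "y = x + 1 \<and> ascends x \<or> x = y + 1 \<and> 1 \<le> y \<and> y < n \<and> \<not> ascends y"
    using \<open>(x, y) \<in> C\<close> descends_iff[of y] by (auto simp: ascends_def)
qed (use descends_iff[of y] in \<open>auto simp: ascends_def\<close>)

lemma cover_subset: "C \<subseteq> E \<times> E"
  by (auto simp: cover_iff fence_elems_def dest!: ascends_range)

lemma cover_trancl_cases:
  "(x, y) \<in> C\<^sup>+ \<Longrightarrow>
     x < y \<and> (\<forall>j \<in> {x..<y}. ascends j) \<or> y < x \<and> (\<forall>j \<in> {y..<x}. \<not> ascends j)"
proof (induction rule: trancl_induct)
  case (base y)
  then show ?case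
    by (auto simp: cover_iff)
next
  case (step y z)
  from \<open>(y, z) \<in> C\<close> consider (up) "z = y + 1" "ascends y" | (down) "y = z + 1" "\<not> ascends z"
    by (auto simp: cover_iff)
  then show ?case
  proof cases
    case up
    with step.IH show ?thesis
      by (auto simp: less_Suc_eq)
  next
    case down
    with step.IH show ?thesis
      by (auto simp: Suc_le_eq le_less)
  qed
qed

lemma acyclic_cover: "acyclic C"
  unfolding acyclic_def using cover_trancl_cases by blast

lemma wf_cover_trancl: "wf (C\<^sup>+)"
proof -
  have "finite C"
    using cover_subset by (rule finite_subset) (simp add: fence_elems_def)
  then show ?thesis
    using acyclic_cover by (simp add: finite_acyclic_wf wf_trancl)
qed

lemma ideal_subset: "I \<in> Ids \<Longrightarrow> I \<subseteq> E"
  by (simp add: fence_ideals_def)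

lemma ideal_down_closed: "I \<in> Ids \<Longrightarrow> x \<in> I \<Longrightarrow> (y, x) \<in> C\<^sup>* \<Longrightarrow> y \<in> E \<Longrightarrow> y \<in> I"
  by (auto simp: fence_ideals_def fence_le_def)

lemma ideal_cover_down: "I \<in> Ids \<Longrightarrow> (y, x) \<in> C \<Longrightarrow> x \<in> I \<Longrightarrow> y \<in> I"
  using ideal_down_closed cover_subset by blast

lemma cover_irrefl: "(x, x) \<notin> C"
  by (simp add: cover_iff)

lemma finite_ideals: "finite Ids"
  by (rule finite_subset[of _ "Pow E"]) (auto simp: fence_ideals_def fence_elems_def)

lemma max_ideal_iff:
  assumes "I \<in> Ids"
  shows "y \<in> fence_max \<alpha> I \<longleftrightarrow> y \<in> I \<and> (\<forall>u. (y, u) \<in> C \<longrightarrow> u \<notin> I)"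
proof
  assume "y \<in> fence_max \<alpha> I"
  then show "y \<in> I \<and> (\<forall>u. (y, u) \<in> C \<longrightarrow> u \<notin> I)"
    using cover_irrefl by (auto simp: fence_max_def fence_le_def)
next
  assume y: "y \<in> I \<and> (\<forall>u. (y, u) \<in> C \<longrightarrow> u \<notin> I)"
  have "z = y" if "z \<in> I" "(y, z) \<in> C\<^sup>*" for z
  proof (rule ccontr)
    assume "z \<noteq> y"
    then obtain u where "(y, u) \<in> C" "(u, z) \<in> C\<^sup>*"
      using \<open>(y, z) \<in> C\<^sup>*\<close> by (metis converse_rtranclE)
    then show False
      using y ideal_down_closed[OF assms \<open>z \<in> I\<close>] cover_subset by blast
  qed
  then show "y \<in> fence_max \<alpha> I"
    using y by (auto simp: fence_max_def fence_le_def)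
qed

lemma min_compl_iff:
  assumes "I \<in> Ids"
  shows "y \<in> fence_min \<alpha> (E - I) \<longleftrightarrow> y \<in> E \<and> y \<notin> I \<and> (\<forall>l. (l, y) \<in> C \<longrightarrow> l \<in> I)"
proof
  assume y: "y \<in> fence_min \<alpha> (E - I)"
  have "l \<in> I" if "(l, y) \<in> C" for l
  proof (rule ccontr)
    assume "l \<notin> I"
    moreover have "l \<in> E"
      using that cover_subset by blast
    ultimately have "l = y"
      using y that by (auto simp: fence_min_def fence_le_def)
    then show False
      using that cover_irrefl by simp
  qed
  then show "y \<in> E \<and> y \<notin> I \<and> (\<forall>l. (l, y) \<in> C \<longrightarrow> l \<in> I)"
    using y by (auto simp: fence_min_def)
next
  assume y: "y \<in> E \<and> y \<notin> I \<and> (\<forall>l. (l, y) \<in> C \<longrightarrow> l \<in> I)"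
  have "z = y" if "z \<in> E" "z \<notin> I" "(z, y) \<in> C\<^sup>*" for z
  proof (rule ccontr)
    assume "z \<noteq> y"
    then obtain l where "(z, l) \<in> C\<^sup>*" "(l, y) \<in> C"
      using \<open>(z, y) \<in> C\<^sup>*\<close> by (metis rtranclE)
    then show False
      using y that ideal_down_closed[OF assms] by blast
  qed
  then show "y \<in> fence_min \<alpha> (E - I)"
    using y by (auto simp: fence_min_def fence_le_def)
qed

lemma rowmotion_ideal: "\<rho> I \<in> Ids"
  by (auto simp: fence_ideals_def rowmotion_def fence_le_def intro: rtrancl_trans)

lemma max_rowmotion:
  assumes I: "I \<in> Ids"
  shows "fence_max \<alpha> (\<rho> I) = fence_min \<alpha> (E - I)"
proof (intro set_eqI iffI)
  fix y assume y: "y \<in> fence_max \<alpha> (\<rho> I)"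
  then obtain m where m: "m \<in> fence_min \<alpha> (E - I)" "fence_le \<alpha> y m"
    by (auto simp: fence_max_def rowmotion_def)
  then have "m \<in> \<rho> I"
    by (auto simp: rowmotion_def fence_min_def fence_le_def)
  then show "y \<in> fence_min \<alpha> (E - I)"
    using y m by (auto simp: fence_max_def)
next
  fix x assume x: "x \<in> fence_min \<alpha> (E - I)"
  have "z = x" if z: "z \<in> \<rho> I" "fence_le \<alpha> x z" for z
  proof -
    obtain m where m: "m \<in> fence_min \<alpha> (E - I)" "fence_le \<alpha> z m" "z \<in> E"
      using z(1) by (auto simp: rowmotion_def)
    have "z \<notin> I"
      using x ideal_down_closed[OF I _ z(2)[unfolded fence_le_def]] by (auto simp: fence_min_def)
    then have "z = m"
      using m by (auto simp: fence_min_def)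
    moreover have "fence_le \<alpha> x m"
      using z(2) m(2) unfolding fence_le_def by (rule rtrancl_trans)
    then have "x = m"
      using x m(1) by (auto simp: fence_min_def)
    ultimately show "z = x"
      by simp
  qed
  moreover have "x \<in> \<rho> I"
    using x by (auto simp: rowmotion_def fence_min_def fence_le_def)
  ultimately show "x \<in> fence_max \<alpha> (\<rho> I)"
    by (auto simp: fence_max_def)
qed

lemma min_compl_below:
  assumes I: "I \<in> Ids" and y: "y \<in> E - I"
  obtains m where "m \<in> fence_min \<alpha> (E - I)" "fence_le \<alpha> m y"
proof -
  let ?Q = "{z \<in> E - I. (z, y) \<in> C\<^sup>*}"
  obtain m where m: "m \<in> ?Q" and least: "\<And>w. (w, m) \<in> C\<^sup>+ \<Longrightarrow> w \<notin> ?Q"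
    using wfE_min[OF wf_cover_trancl, of y ?Q] y by blast
  have "w = m" if w: "w \<in> E - I" "(w, m) \<in> C\<^sup>*" for w
  proof (rule ccontr)
    assume "w \<noteq> m"
    then have "(w, m) \<in> C\<^sup>+"
      using w(2) by (simp add: rtrancl_eq_or_trancl)
    moreover have "w \<in> ?Q"
      using w m by (auto intro: rtrancl_trans)
    ultimately show False
      using least by blast
  qed
  then have "m \<in> fence_min \<alpha> (E - I)"
    using m by (auto simp: fence_min_def fence_le_def)
  then show thesis
    using m that by (auto simp: fence_le_def)
qed

lemma ideal_eq_not_above_min_compl:
  assumes I: "I \<in> Ids"
  shows "I = {y \<in> E. \<not> (\<exists>m \<in> fence_min \<alpha> (E - I). fence_le \<alpha> m y)}"
proof -
  have "m \<notin> I" if "m \<in> fence_min \<alpha> (E - I)" for m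
    using that by (simp add: fence_min_def)
  then have "y \<notin> I" if "m \<in> fence_min \<alpha> (E - I)" "fence_le \<alpha> m y" for y m
    using that ideal_down_closed[OF I, of y m] by (auto simp: fence_min_def fence_le_def)
  then show ?thesis
    using ideal_subset[OF I] min_compl_below[OF I] by blast
qed

lemma inj_on_rowmotion: "inj_on \<rho> Ids"
proof (rule inj_onI)
  fix I J assume "I \<in> Ids" "J \<in> Ids" "\<rho> I = \<rho> J"
  then have "fence_min \<alpha> (E - I) = fence_min \<alpha> (E - J)"
    by (metis max_rowmotion)
  then show "I = J"
    by (subst ideal_eq_not_above_min_compl[OF \<open>I \<in> Ids\<close>],
        subst ideal_eq_not_above_min_compl[OF \<open>J \<in> Ids\<close>]) simp
qed

lemma row_orbit_subset: "I \<in> Ids \<Longrightarrow> row_orbit \<alpha> I \<subseteq> Ids"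
proof -
  assume "I \<in> Ids"
  then have "(\<rho> ^^ k) I \<in> Ids" for k
    by (induction k) (simp_all add: rowmotion_ideal)
  then show ?thesis
    by (auto simp: row_orbit_def)
qed

lemma finite_row_orbit: "I \<in> Ids \<Longrightarrow> finite (row_orbit \<alpha> I)"
  using row_orbit_subset finite_ideals by (rule finite_subset)

lemma start_in_row_orbit: "I \<in> row_orbit \<alpha> I"
  unfolding row_orbit_def by (metis (mono_tags) funpow_0 mem_Collect_eq)

lemma card_row_orbit_pos: "I \<in> Ids \<Longrightarrow> 0 < card (row_orbit \<alpha> I)"
  using finite_row_orbit start_in_row_orbit card_gt_0_iff by blast

lemma rowmotion_image_row_orbit:
  assumes "I \<in> Ids"
  shows "\<rho> ` row_orbit \<alpha> I = row_orbit \<alpha> I"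
proof (rule endo_inj_surj)
  show "finite (row_orbit \<alpha> I)"
    using assms by (rule finite_row_orbit)
  show "\<rho> ` row_orbit \<alpha> I \<subseteq> row_orbit \<alpha> I"
    by (auto simp: row_orbit_def intro: exI[of _ "Suc k" for k])
  show "inj_on \<rho> (row_orbit \<alpha> I)"
    using inj_on_rowmotion row_orbit_subset[OF assms] by (rule inj_on_subset)
qed

lemma sum_row_orbit_rowmotion:
  "I \<in> Ids \<Longrightarrow> (\<Sum>J \<in> row_orbit \<alpha> I. f (\<rho> J)) = (\<Sum>J \<in> row_orbit \<alpha> I. f J)"
  using sum.reindex[of \<rho> "row_orbit \<alpha> I" f] rowmotion_image_row_orbit
    row_orbit_subset inj_on_subset[OF inj_on_rowmotion] by simp

lemma mesic_iff_orbit_sum: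
  "mesic \<alpha> f c \<longleftrightarrow> (\<forall>I \<in> Ids. (\<Sum>J \<in> row_orbit \<alpha> I. f J) = c * card (row_orbit \<alpha> I))"
  using card_row_orbit_pos by (auto simp: mesic_def field_simps)

lemma chi_eq:
  "J \<in> Ids \<Longrightarrow> chi \<alpha> y J = (if y \<in> J \<and> (\<forall>u. (y, u) \<in> C \<longrightarrow> u \<notin> J) then 1 else 0)"
  by (simp add: chi_def max_ideal_iff)

lemma chi_rowmotion_eq:
  "J \<in> Ids \<Longrightarrow> chi \<alpha> y (\<rho> J) = (if y \<in> E \<and> y \<notin> J \<and> (\<forall>l. (l, y) \<in> C \<longrightarrow> l \<in> J) then 1 else 0)"
  by (simp add: chi_def max_rowmotion min_compl_iff)

lemma chi_unique_upper_cover: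
  assumes "J \<in> Ids" "\<And>v. (y, v) \<in> C \<longleftrightarrow> v = u"
  shows "chi \<alpha> y J = chi_hat y J - chi_hat u J"
  using assms ideal_cover_down[OF assms(1), of y u] by (simp add: chi_eq chi_hat_def)

lemma chi_no_upper_cover:
  assumes "J \<in> Ids" "\<And>v. (y, v) \<notin> C"
  shows "chi \<alpha> y J = chi_hat y J"
  using assms by (simp add: chi_eq chi_hat_def)

lemma chi_rowmotion_unique_lower_cover:
  assumes "J \<in> Ids" "y \<in> E" "\<And>v. (v, y) \<in> C \<longleftrightarrow> v = l"
  shows "chi \<alpha> y (\<rho> J) = chi_hat l J - chi_hat y J"
  using assms ideal_cover_down[OF assms(1), of l y] by (simp add: chi_rowmotion_eq chi_hat_def)

lemma chi_rowmotion_no_lower_cover: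
  assumes "J \<in> Ids" "y \<in> E" "\<And>v. (v, y) \<notin> C"
  shows "chi \<alpha> y (\<rho> J) = 1 - chi_hat y J"
  using assms by (simp add: chi_rowmotion_eq chi_hat_def)

definition ascends_ext :: "nat \<Rightarrow> bool" where
  "ascends_ext j \<longleftrightarrow> j = 0 \<or> j = n \<or> ascends j"

definition chi_hat_ext :: "nat \<Rightarrow> nat set \<Rightarrow> real" where
  "chi_hat_ext k J = (if k = 0 then 1 else chi_hat k J)"

lemma chi_hat_ext_pos [simp]: "0 < k \<Longrightarrow> chi_hat_ext k J = chi_hat k J"
  by (simp add: chi_hat_ext_def)

lemma chi_hat_ext_top: "J \<in> Ids \<Longrightarrow> chi_hat_ext (n + 1) J = 0"
  using ideal_subset by (fastforce simp: chi_hat_def fence_elems_def)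

lemma upper_cover_iff:
  "y \<in> E \<Longrightarrow>
     (y, u) \<in> C \<longleftrightarrow> u = y + 1 \<and> y < n \<and> ascends_ext y \<or> u = y - 1 \<and> \<not> ascends_ext (y - 1)"
  by (auto simp: cover_iff ascends_ext_def fence_elems_def dest: ascends_range)

lemma lower_cover_iff:
  "y \<in> E \<Longrightarrow>
     (l, y) \<in> C \<longleftrightarrow> l = y - 1 \<and> 1 < y \<and> ascends_ext (y - 1) \<or> l = y + 1 \<and> \<not> ascends_ext y"
  by (auto simp: cover_iff ascends_ext_def fence_elems_def dest: ascends_range)
    (metis diff_Suc_Suc minus_nat.diff_0)

lemma chi_ascending:
  assumes J: "J \<in> Ids" and y: "y \<in> E" and asc: "ascends_ext (y - 1)" "ascends_ext y"
  shows "chi \<alpha> y J = chi_hat_ext y J - chi_hat_ext (y + 1) J"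
    and "chi \<alpha> y (\<rho> J) = chi_hat_ext (y - 1) J - chi_hat_ext y J"
proof -
  have "0 < y"
    using y by (simp add: fence_elems_def)
  show "chi \<alpha> y J = chi_hat_ext y J - chi_hat_ext (y + 1) J"
  proof (cases "y < n")
    case True
    then have "(y, v) \<in> C \<longleftrightarrow> v = y + 1" for v
      using upper_cover_iff[OF y] asc by auto
    then show ?thesis
      using chi_unique_upper_cover[OF J] \<open>0 < y\<close> by simp
  next
    case False
    then have "y = n" and "(y, v) \<notin> C" for v
      using y upper_cover_iff[OF y] asc by (auto simp: fence_elems_def)
    then show ?thesis
      using chi_no_upper_cover[OF J] chi_hat_ext_top[OF J] \<open>0 < y\<close> by simp
  qed
  show "chi \<alpha> y (\<rho> J) = chi_hat_ext (y - 1) J - chi_hat_ext y J"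
  proof (cases "1 < y")
    case True
    then have "(v, y) \<in> C \<longleftrightarrow> v = y - 1" for v
      using lower_cover_iff[OF y] asc by auto
    then show ?thesis
      using chi_rowmotion_unique_lower_cover[OF J y] True by simp
  next
    case False
    then have "y = 1" and "(v, y) \<notin> C" for v
      using \<open>0 < y\<close> lower_cover_iff[OF y] asc by auto
    then show ?thesis
      using chi_rowmotion_no_lower_cover[OF J y] by (simp add: chi_hat_ext_def)
  qed
qed

lemma chi_descending:
  assumes J: "J \<in> Ids" and y: "y \<in> E" and desc: "\<not> ascends_ext (y - 1)" "\<not> ascends_ext y"
  shows "chi \<alpha> y J = chi_hat_ext y J - chi_hat_ext (y - 1) J"
    and "chi \<alpha> y (\<rho> J) = chi_hat_ext (y + 1) J - chi_hat_ext y J"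
proof -
  have "1 < y"
    using desc(1) by (simp add: ascends_ext_def)
  have "(y, v) \<in> C \<longleftrightarrow> v = y - 1" and "(v, y) \<in> C \<longleftrightarrow> v = y + 1" for v
    using upper_cover_iff[OF y] lower_cover_iff[OF y] desc by auto
  then show "chi \<alpha> y J = chi_hat_ext y J - chi_hat_ext (y - 1) J"
    and "chi \<alpha> y (\<rho> J) = chi_hat_ext (y + 1) J - chi_hat_ext y J"
    using chi_unique_upper_cover[OF J] chi_rowmotion_unique_lower_cover[OF J y] \<open>1 < y\<close> by simp_all
qed

lemma chi_peak:
  assumes J: "J \<in> Ids" and y: "y \<in> E" and "ascends_ext (y - 1)" "\<not> ascends_ext y"
  shows "chi \<alpha> y J = chi_hat_ext y J"
proof -
  have "(y, v) \<notin> C" for v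
    using upper_cover_iff[OF y] assms by auto
  then show ?thesis
    using chi_no_upper_cover[OF J] y by (simp add: fence_elems_def)
qed

lemma chi_valley:
  assumes J: "J \<in> Ids" and y: "y \<in> E" and "\<not> ascends_ext (y - 1)" "ascends_ext y"
  shows "chi \<alpha> y (\<rho> J) = 1 - chi_hat_ext y J"
proof -
  have "(v, y) \<notin> C" for v
    using lower_cover_iff[OF y] assms by auto
  then show ?thesis
    using chi_rowmotion_no_lower_cover[OF J y] y by (simp add: fence_elems_def)
qed

lemma ascends_ext_1: "ascends_ext 1"
proof -
  have "a 0 \<le> 1" "1 < a 1"
    using a_0 a_1 first_ge_2 by auto
  then show ?thesis
    using cover_in_segment(1)[of 1 1] length_ge_2 n_ge_3 by (simp add: ascends_ext_def)
qed

lemma direction_change_at_shared: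
  assumes y: "1 < y" "y < n" and change: "ascends (y - 1) \<noteq> ascends y"
  shows "\<exists>i \<in> {1..t - 1}. a i = y"
proof -
  obtain i where i: "1 \<le> i" "i \<le> t" "a (i - 1) \<le> y - 1" "y - 1 < a i"
    by (rule segment_exists[of "y - 1"]) (use y in auto)
  have "ascends (y - 1) \<longleftrightarrow> odd i"
    using cover_in_segment(1)[OF i] y by simp
  moreover have "ascends y \<longleftrightarrow> odd i" if "y < a i"
    using cover_in_segment(1)[of i y] i y that by simp
  ultimately have "a i = y"
    using change i(4) by fastforce
  moreover have "i \<noteq> t"
    using \<open>a i = y\<close> a_length y by auto
  ultimately show ?thesis
    using i by auto
qed

end

locale fence_orbit = fence +
  fixes I :: "nat set"
  assumes start_ideal: "I \<in> fence_ideals \<alpha>"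
begin

abbreviation "orbit \<equiv> row_orbit \<alpha> I"
abbreviation "orbit_size \<equiv> real (card orbit)"

definition in_count :: "nat \<Rightarrow> real" where
  "in_count k = (\<Sum>J \<in> orbit. chi_hat_ext k J)"

definition max_count :: "nat \<Rightarrow> real" where
  "max_count k = (\<Sum>J \<in> orbit. chi \<alpha> k J)"

lemma in_count_0: "in_count 0 = orbit_size"
  by (simp add: in_count_def chi_hat_ext_def)

lemma in_count_top: "in_count (n + 1) = 0"
  using row_orbit_subset[OF start_ideal] chi_hat_ext_top
  by (auto simp: in_count_def intro: sum.neutral)

lemma max_count_rowmotion: "max_count k = (\<Sum>J \<in> orbit. chi \<alpha> k (\<rho> J))"
  by (simp add: max_count_def sum_row_orbit_rowmotion[OF start_ideal])

lemma sum_orbit_cong: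
  "(\<And>J. J \<in> Ids \<Longrightarrow> f J = g J) \<Longrightarrow> (\<Sum>J \<in> orbit. f J) = (\<Sum>J \<in> orbit. g J)"
  using row_orbit_subset[OF start_ideal] by (intro sum.cong) auto

lemma max_count_ascending:
  assumes "y \<in> E" "ascends_ext (y - 1)" "ascends_ext y"
  shows "max_count y = in_count y - in_count (y + 1)"
    and "max_count y = in_count (y - 1) - in_count y"
proof -
  show "max_count y = in_count y - in_count (y + 1)"
    using sum_orbit_cong[of "chi \<alpha> y", OF chi_ascending(1)[OF _ assms]]
    by (simp add: max_count_def in_count_def sum_subtractf)
  show "max_count y = in_count (y - 1) - in_count y"
    using sum_orbit_cong[of "\<lambda>J. chi \<alpha> y (\<rho> J)", OF chi_ascending(2)[OF _ assms]]
    by (simp add: max_count_rowmotion in_count_def sum_subtractf)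
qed

lemma max_count_descending:
  assumes "y \<in> E" "\<not> ascends_ext (y - 1)" "\<not> ascends_ext y"
  shows "max_count y = in_count y - in_count (y - 1)"
    and "max_count y = in_count (y + 1) - in_count y"
proof -
  show "max_count y = in_count y - in_count (y - 1)"
    using sum_orbit_cong[of "chi \<alpha> y", OF chi_descending(1)[OF _ assms]]
    by (simp add: max_count_def in_count_def sum_subtractf)
  show "max_count y = in_count (y + 1) - in_count y"
    using sum_orbit_cong[of "\<lambda>J. chi \<alpha> y (\<rho> J)", OF chi_descending(2)[OF _ assms]]
    by (simp add: max_count_rowmotion in_count_def sum_subtractf)
qed

lemma max_count_peak:
  assumes "y \<in> E" "ascends_ext (y - 1)" "\<not> ascends_ext y"
  shows "max_count y = in_count y"
  using sum_orbit_cong[of "chi \<alpha> y", OF chi_peak[OF _ assms]]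
  by (simp add: max_count_def in_count_def)

lemma max_count_valley:
  assumes "y \<in> E" "\<not> ascends_ext (y - 1)" "ascends_ext y"
  shows "max_count y = orbit_size - in_count y"
  using sum_orbit_cong[of "\<lambda>J. chi \<alpha> y (\<rho> J)", OF chi_valley[OF _ assms]]
  by (simp add: max_count_rowmotion in_count_def sum_subtractf)

lemma in_count_midpoint:
  assumes "y \<in> E" "ascends_ext (y - 1) = ascends_ext y"
  shows "2 * in_count y = in_count (y - 1) + in_count (y + 1)"
  using max_count_ascending[OF assms(1)] max_count_descending[OF assms(1)] assms(2) by fastforce

end

locale palindromic_fence = fence +
  assumes palindrome: "rev \<alpha> = \<alpha>"
    and odd_length: "odd (length \<alpha>)"
begin

lemma a_mirror:
  assumes "i \<le> t"
  shows "a (t - i) + a i = n + 1"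
proof -
  have "drop (t - i) \<alpha> = rev (take i \<alpha>)"
    using drop_rev[of "t - i" \<alpha>] palindrome assms by simp
  then have "sum_list (take (t - i) \<alpha>) + sum_list (take i \<alpha>) = sum_list \<alpha>"
    by (metis append_take_drop_id sum_list_append sum_list_rev)
  then show ?thesis
    using a_length by (simp add: fence_a_def)
qed

lemma ascends_mirror:
  assumes j: "1 \<le> j" "j < n"
  shows "ascends (n - j) \<longleftrightarrow> ascends j"
proof -
  obtain i where i: "1 \<le> i" "i \<le> t" "a (i - 1) \<le> j" "j < a i"
    by (rule segment_exists[of j]) (use j in auto)
  have i': "1 \<le> t + 1 - i" "t + 1 - i \<le> t"
    using i by auto
  have "a (t - i) + a i = n + 1" "a (t - (i - 1)) + a (i - 1) = n + 1"
    using a_mirror[of i] a_mirror[of "i - 1"] i(2) by auto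
  moreover have "t + 1 - i - 1 = t - i" "t + 1 - i = t - (i - 1)"
    using i(1,2) by auto
  ultimately have "a (t + 1 - i - 1) \<le> n - j" "n - j < a (t + 1 - i)"
    using i j by auto
  then have "ascends (n - j) \<longleftrightarrow> odd (t + 1 - i)"
    using cover_in_segment(1)[OF i'] j by simp
  moreover have "ascends j \<longleftrightarrow> odd i"
    using cover_in_segment(1)[OF i j] .
  moreover have "odd (t + 1 - i) \<longleftrightarrow> odd i"
    using odd_length i(2) by presburger
  ultimately show ?thesis
    by simp
qed

lemma ascends_ext_mirror: "j \<le> n \<Longrightarrow> ascends_ext (n - j) \<longleftrightarrow> ascends_ext j"
  using ascends_mirror[of j] by (cases "j = 0 \<or> j = n") (auto simp: ascends_ext_def)

lemma ascends_ext_mirror_shape: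
  assumes "y \<in> E"
  shows "ascends_ext (n + 1 - y - 1) \<longleftrightarrow> ascends_ext y"
    and "ascends_ext (n + 1 - y) \<longleftrightarrow> ascends_ext (y - 1)"
  using ascends_ext_mirror[of y] ascends_ext_mirror[of "y - 1"] assms
  by (auto simp: fence_elems_def Suc_diff_le)

lemma direction_change_shared:
  assumes y: "y \<in> E" and change: "ascends_ext (y - 1) \<noteq> ascends_ext y"
  obtains i where "i \<in> {1..t - 1}" "a i = y" "a (t - i) = n + 1 - y"
proof -
  have "y \<noteq> 1"
    using change ascends_ext_1 by (auto simp: ascends_ext_def)
  moreover have "y \<noteq> n"
    using change ascends_ext_1 ascends_ext_mirror[of 1] n_ge_3 by (auto simp: ascends_ext_def)
  ultimately have "1 < y" "y < n" "ascends (y - 1) \<noteq> ascends y"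
    using y change by (auto simp: fence_elems_def ascends_ext_def)
  then obtain i where "i \<in> {1..t - 1}" "a i = y"
    using direction_change_at_shared by blast
  moreover have "a (t - i) = n + 1 - y"
    using a_mirror[of i] \<open>i \<in> {1..t - 1}\<close> \<open>a i = y\<close> by force
  ultimately show thesis
    using that by blast
qed

end

locale palindromic_fence_orbit = palindromic_fence + fence_orbit +
  assumes shared_balanced: "\<And>i. i \<in> {1..t - 1} \<Longrightarrow> max_count (a i) = max_count (a (t - i))"
begin

definition mirror_defect :: "nat \<Rightarrow> real" where
  "mirror_defect y = in_count y + in_count (n + 1 - y) - orbit_size"

lemma mirror_defect_zero_or_midpoint:
  assumes y: "y \<in> E"
  shows "mirror_defect y = 0 \<or> 2 * mirror_defect y = mirror_defect (y - 1) + mirror_defect (y + 1)"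
proof -
  define y' where "y' = n + 1 - y"
  have y': "y' \<in> E" "n + 1 - (y - 1) = y' + 1" "n + 1 - (y + 1) = y' - 1"
    using y by (auto simp: y'_def fence_elems_def)
  have shape: "ascends_ext (y' - 1) \<longleftrightarrow> ascends_ext y" "ascends_ext y' \<longleftrightarrow> ascends_ext (y - 1)"
    unfolding y'_def using ascends_ext_mirror_shape[OF y] .
  show ?thesis
  proof (cases "ascends_ext (y - 1) \<longleftrightarrow> ascends_ext y")
    case True
    then have "2 * in_count y = in_count (y - 1) + in_count (y + 1)"
      and "2 * in_count y' = in_count (y' - 1) + in_count (y' + 1)"
      using in_count_midpoint y y'(1) shape by auto
    then show ?thesis
      unfolding mirror_defect_def y'(2,3) y'_def[symmetric] by simp
  next
    case False
    then obtain i where "i \<in> {1..t - 1}" "a i = y" "a (t - i) = y'"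
      using direction_change_shared[OF y] unfolding y'_def by blast
    then have "max_count y = max_count y'"
      using shared_balanced by metis
    from False consider (peak) "ascends_ext (y - 1)" "\<not> ascends_ext y"
      | (valley) "\<not> ascends_ext (y - 1)" "ascends_ext y"
      by blast
    then have "mirror_defect y = 0"
    proof cases
      case peak
      then have "max_count y = in_count y" "max_count y' = orbit_size - in_count y'"
        using max_count_peak[OF y] max_count_valley[OF y'(1)] shape by simp_all
      then show ?thesis
        using \<open>max_count y = max_count y'\<close> unfolding mirror_defect_def y'_def[symmetric] by simp
    next
      case valley
      then have "max_count y = orbit_size - in_count y" "max_count y' = in_count y'"
        using max_count_valley[OF y] max_count_peak[OF y'(1)] shape by simp_all
      then show ?thesis
        using \<open>max_count y = max_count y'\<close> unfolding mirror_defect_def y'_def[symmetric] by simp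
    qed
    then show ?thesis ..
  qed
qed

lemma in_count_mirror:
  assumes "y \<le> n + 1"
  shows "in_count y + in_count (n + 1 - y) = orbit_size"
proof -
  have "mirror_defect y = 0"
  proof (rule max_principle_zero[where m = "n + 1"])
    show "mirror_defect 0 = 0" "mirror_defect (n + 1) = 0"
      using in_count_0 in_count_top by (simp_all add: mirror_defect_def)
    show "mirror_defect z = 0 \<or> 2 * mirror_defect z = mirror_defect (z - 1) + mirror_defect (z + 1)"
      if "0 < z" "z < n + 1" for z
      using mirror_defect_zero_or_midpoint that by (simp add: fence_elems_def)
  qed fact
  then show ?thesis
    by (simp add: mirror_defect_def)
qed

lemma max_count_mirror:
  assumes k: "k \<in> E"
  shows "max_count (n + 1 - k) = max_count k"
proof -
  define k' where "k' = n + 1 - k"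
  have k': "k' \<in> E" "n + 1 - (k - 1) = k' + 1" "n + 1 - (k + 1) = k' - 1"
    using k by (auto simp: k'_def fence_elems_def)
  have shape: "ascends_ext (k' - 1) \<longleftrightarrow> ascends_ext k" "ascends_ext k' \<longleftrightarrow> ascends_ext (k - 1)"
    unfolding k'_def using ascends_ext_mirror_shape[OF k] .
  have mirror_sums: "in_count k + in_count k' = orbit_size"
    "in_count (k - 1) + in_count (k' + 1) = orbit_size"
    "in_count (k + 1) + in_count (k' - 1) = orbit_size"
    using in_count_mirror[of k] in_count_mirror[of "k - 1"]
      in_count_mirror[of "k + 1"] k k'
    by (auto simp: k'_def fence_elems_def)
  consider (ascending) "ascends_ext (k - 1)" "ascends_ext k"
    | (descending) "\<not> ascends_ext (k - 1)" "\<not> ascends_ext k"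
    | (peak) "ascends_ext (k - 1)" "\<not> ascends_ext k"
    | (valley) "\<not> ascends_ext (k - 1)" "ascends_ext k"
    by blast
  then have "max_count k' = max_count k"
  proof cases
    case ascending
    then have "max_count k = in_count k - in_count (k + 1)"
      and "max_count k' = in_count (k' - 1) - in_count k'"
      using max_count_ascending(1)[OF k] max_count_ascending(2)[OF k'(1)] shape by simp_all
    then show ?thesis
      using mirror_sums by linarith
  next
    case descending
    then have "max_count k = in_count k - in_count (k - 1)"
      and "max_count k' = in_count (k' + 1) - in_count k'"
      using max_count_descending(1)[OF k] max_count_descending(2)[OF k'(1)] shape by simp_all
    then show ?thesis
      using mirror_sums by linarith
  next
    case peak
    then have "max_count k = in_count k" "max_count k' = orbit_size - in_count k'"
      using max_count_peak[OF k] max_count_valley[OF k'(1)] shape by simp_all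
    then show ?thesis
      using mirror_sums by linarith
  next
    case valley
    then have "max_count k = orbit_size - in_count k" "max_count k' = in_count k'"
      using max_count_valley[OF k] max_count_peak[OF k'(1)] shape by simp_all
    then show ?thesis
      using mirror_sums by linarith
  qed
  then show ?thesis
    by (simp add: k'_def)
qed

lemma orbit_sums_mirror:
  assumes "k \<in> E"
  shows "(\<Sum>J \<in> orbit. chi \<alpha> k J - chi \<alpha> (n + 1 - k) J) = 0"
    and "(\<Sum>J \<in> orbit. chi_hat k J + chi_hat (n + 1 - k) J) = orbit_size"
proof -
  have "0 < k" "0 < n + 1 - k"
    using assms by (auto simp: fence_elems_def)
  then show "(\<Sum>J \<in> orbit. chi \<alpha> k J - chi \<alpha> (n + 1 - k) J) = 0"
    and "(\<Sum>J \<in> orbit. chi_hat k J + chi_hat (n + 1 - k) J) = orbit_size"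
    using max_count_mirror[OF assms] in_count_mirror[of k] assms
    by (simp_all add: max_count_def in_count_def sum_subtractf sum.distrib fence_elems_def)
qed

end

theorem theorem5p9:
  fixes \<alpha> :: "nat list"
  assumes "is_fence_comp \<alpha>"
    and "\<forall>i < length \<alpha>. \<alpha> ! i = \<alpha> ! (length \<alpha> - 1 - i)"
    and "odd (length \<alpha>)"
    and "\<forall>i \<in> {1..length \<alpha> - 1}.
           mesic \<alpha> (\<lambda>I. chi \<alpha> (fence_a \<alpha> i) I - chi \<alpha> (fence_a \<alpha> (length \<alpha> - i)) I) 0"
  shows "(\<forall>k \<in> {1..fence_n \<alpha>}.
            mesic \<alpha> (\<lambda>I. chi \<alpha> k I - chi \<alpha> (fence_n \<alpha> - k + 1) I) 0)
       \<and> (\<forall>k \<in> {1..fence_n \<alpha>}.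
            mesic \<alpha> (\<lambda>I. chi_hat k I + chi_hat (fence_n \<alpha> - k + 1) I) 1)"
proof -
  have "rev \<alpha> = \<alpha>"
    using assms(2) by (intro rev_eq_if_nth_mirror) blast
  then interpret palindromic_fence \<alpha>
    using assms(1,3) by unfold_locales
  have "(\<Sum>J \<in> row_orbit \<alpha> I. chi \<alpha> k J - chi \<alpha> (n - k + 1) J) = 0 \<and>
     (\<Sum>J \<in> row_orbit \<alpha> I. chi_hat k J + chi_hat (n - k + 1) J) = card (row_orbit \<alpha> I)"
    if I: "I \<in> Ids" and k: "k \<in> E" for I k
  proof -
    interpret fence_orbit \<alpha> I
      using I by unfold_locales
    interpret palindromic_fence_orbit \<alpha> I
      using assms(4) I by unfold_locales (simp add: mesic_iff_orbit_sum max_count_def sum_subtractf)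
    have "n - k + 1 = n + 1 - k"
      using k by (auto simp: fence_elems_def)
    then show ?thesis
      using orbit_sums_mirror[OF k] by simp
  qed
  then show ?thesis
    by (simp add: mesic_iff_orbit_sum fence_elems_def)
qed

end
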